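(* Let $q\ge 2$, $t\ge 2$ and $s\ge 1$ be integers. Then (2) $K_{q}^{RT}((t-1)q,s,(t-1)qs-t)\le K_{q}((t-1)q,(t-1)q-t)$; (3) $K_{q}^{RT}((t-1)q,s,(t-1)qs-t)\le q-2+CAN(t,(t-1)q,2)$.
   Context: For positive integers $m,s$, the RT poset $[m\times s]$ is the set $\{1,\ldots,ms\}$ partitioned into $m$ blocks $B_i=\{is+1,\ldots,(i+1)s\}$; each block is a chain under the usual order of the integers, and elements of different blocks are incomparable. An ideal is a subset $I$ such that $b\in I$ and $a\preceq b$ imply $a\in I$; $\langle A\rangle$ denotes the smallest ideal containing $A$. For $x,y\in\mathbb{Z}_q^{ms}$, the RT distance is $d_{RT}(x,y)=|\langle\{i:x_i\neq y_i\}\rangle|$. A code $C\subseteq \mathbb{Z}_q^{ms}$ is an $R$-covering if for every $x\in\mathbb{Z}_q^{ms}$ there is $c\in C$ with $d_{RT}(x,c)\le R$; $K_q^{RT}(m,s,R)$ is the smallest size of an $R$-covering. $K_q(n,R)=K_q^{RT}(n,1,R)$ is the classical Hamming covering number. A covering array $CA(N;t,n,v)$ ($2\le t\le n$) is an $N\times n$ array over an alphabet of size $v$ in which, for every set of $t$ columns, every $t$-tuple over the alphabet appears as a row of the corresponding $N\times t$ subarray; $CAN(t,n,v)$ is the least such $N$. *)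

theory Defs
  imports Main
begin

text \<open>Coordinates are indexed 0..ms-1 (the paper uses 1..ms). Block i is
  {i*s, ..., (i+1)*s - 1}; two positions are comparable iff in the same block.\<close>

definition rt_le :: "nat \<Rightarrow> nat \<Rightarrow> nat \<Rightarrow> bool" where
  "rt_le s a b \<longleftrightarrow> a div s = b div s \<and> a \<le> b"

definition rt_ideal :: "nat \<Rightarrow> nat set \<Rightarrow> nat set" where
  "rt_ideal s A = {a. \<exists>b\<in>A. rt_le s a b}"

text \<open>Z_q^n: vectors as functions, entries < q on 0..n-1, zero elsewhere.\<close>
definition space :: "nat \<Rightarrow> nat \<Rightarrow> (nat \<Rightarrow> nat) set" where
  "space q n = {x. (\<forall>i<n. x i < q) \<and> (\<forall>i\<ge>n. x i = 0)}"

definition d_RT :: "nat \<Rightarrow> nat \<Rightarrow> (nat \<Rightarrow> nat) \<Rightarrow> (nat \<Rightarrow> nat) \<Rightarrow> nat" where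
  "d_RT m s x y = card (rt_ideal s {i. i < m * s \<and> x i \<noteq> y i})"

definition rt_covering :: "nat \<Rightarrow> nat \<Rightarrow> nat \<Rightarrow> nat \<Rightarrow> (nat \<Rightarrow> nat) set \<Rightarrow> bool" where
  "rt_covering q m s R C \<longleftrightarrow> C \<subseteq> space q (m * s) \<and>
     (\<forall>x\<in>space q (m * s). \<exists>c\<in>C. d_RT m s x c \<le> R)"

definition K_RT :: "nat \<Rightarrow> nat \<Rightarrow> nat \<Rightarrow> nat \<Rightarrow> nat" where
  "K_RT q m s R = (LEAST k. \<exists>C. rt_covering q m s R C \<and> card C = k)"

definition K_H :: "nat \<Rightarrow> nat \<Rightarrow> nat \<Rightarrow> nat" where
  "K_H q n R = K_RT q n 1 R"

text \<open>Covering array CA(N;t,n,v): rows 0..N-1, columns 0..n-1, alphabet {0..<v}.\<close>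
definition covering_array :: "nat \<Rightarrow> nat \<Rightarrow> nat \<Rightarrow> nat \<Rightarrow> (nat \<Rightarrow> nat \<Rightarrow> nat) \<Rightarrow> bool" where
  "covering_array N t n v A \<longleftrightarrow>
     (\<forall>i<N. \<forall>j<n. A i j < v) \<and>
     (\<forall>T. T \<subseteq> {..<n} \<and> card T = t \<longrightarrow>
        (\<forall>f. (\<forall>j\<in>T. f j < v) \<longrightarrow> (\<exists>i<N. \<forall>j\<in>T. A i j = f j)))"

definition CAN :: "nat \<Rightarrow> nat \<Rightarrow> nat \<Rightarrow> nat" where
  "CAN t n v = (LEAST N. \<exists>A. covering_array N t n v A)"

end

theory Submission
  imports Defs
begin

text \<open>The last position of each block is maximal in the RT order, so the ideal generated
  by the disagreement set of two words misses every block top where they agree. Hence a word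
  that agrees with x at the tops of t blocks is within RT distance ms - t of x, and it suffices
  to find, for every word y of length m = (t-1)q over Z_q (the tops of x), a codeword agreeing
  with y in t places. A Hamming covering of radius m - t does this by definition; so do the rows
  of a binary covering array of strength t together with the q - 2 constant words 2, ..., q-1:
  either some value v \<ge> 2 occurs t times in y, or at most (q-2)(t-1) entries are \<ge> 2 and the
  remaining 2(t-1) \<ge> t binary entries are matched by some row.\<close>

definition block_top :: "nat \<Rightarrow> nat \<Rightarrow> nat" where
  "block_top s i = Suc i * s - 1"

lemma block_top_eq:
  assumes "s \<ge> 1" shows "block_top s i = (s - 1) + i * s"
  using assms unfolding block_top_def by simp

lemma block_top_div:
  assumes "s \<ge> 1" shows "block_top s i div s = i"
  unfolding block_top_eq[OF assms] using assms by (subst div_mult_self1) auto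

lemma block_top_mod:
  assumes "s \<ge> 1" shows "block_top s i mod s = s - 1"
  unfolding block_top_eq[OF assms] using assms by (subst mod_mult_self1) auto

lemma block_top_less:
  assumes "s \<ge> 1" and "i < m" shows "block_top s i < m * s"
proof -
  have "Suc i * s \<le> m * s" using assms by (intro mult_le_mono1) simp
  then show ?thesis using assms unfolding block_top_def by simp
qed

lemma inj_on_block_top:
  assumes "s \<ge> 1" shows "inj_on (block_top s) A"
  by (rule inj_onI) (metis assms block_top_div)

lemma rt_le_block_top_imp_eq:
  assumes "s \<ge> 1" and "rt_le s (block_top s i) b" shows "b = block_top s i"
proof -
  have "b div s = i" using assms block_top_div unfolding rt_le_def by metis
  then have "b = i * s + b mod s" using div_mult_mod_eq[of b s] by simp
  moreover have "b mod s < s" using assms(1) by simp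
  ultimately have "b \<le> block_top s i" unfolding block_top_def by simp
  then show ?thesis using assms(2) unfolding rt_le_def by simp
qed

lemma d_RT_le_if_agree_on_block_tops:
  assumes s: "s \<ge> 1" and A: "A \<subseteq> {..<m}"
    and agree: "\<And>i. i \<in> A \<Longrightarrow> x (block_top s i) = c (block_top s i)"
  shows "d_RT m s x c \<le> m * s - card A"
proof -
  have tops: "block_top s ` A \<subseteq> {..<m * s}" using A block_top_less[OF s] by auto
  have "rt_ideal s {j. j < m * s \<and> x j \<noteq> c j} \<subseteq> {..<m * s} - block_top s ` A"
  proof
    fix a assume "a \<in> rt_ideal s {j. j < m * s \<and> x j \<noteq> c j}"
    then obtain b where b: "b < m * s" "x b \<noteq> c b" "rt_le s a b"
      unfolding rt_ideal_def by auto
    have "a \<notin> block_top s ` A"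
      using b agree rt_le_block_top_imp_eq[OF s] by blast
    moreover have "a < m * s" using b unfolding rt_le_def by simp
    ultimately show "a \<in> {..<m * s} - block_top s ` A" by simp
  qed
  then have "d_RT m s x c \<le> card ({..<m * s} - block_top s ` A)"
    unfolding d_RT_def by (intro card_mono) auto
  also have "\<dots> = m * s - card A"
    using tops finite_subset[OF tops] card_image[OF inj_on_block_top[OF s]]
    by (simp add: card_Diff_subset)
  finally show ?thesis .
qed

lemma d_RT_one_eq_hamming: "d_RT n 1 x y = card {i. i < n \<and> x i \<noteq> y i}"
proof -
  have "rt_ideal 1 D = D" for D unfolding rt_ideal_def rt_le_def by auto
  then show ?thesis unfolding d_RT_def by simp
qed

lemma finite_space: "finite (space q n)"
proof (rule finite_subset)
  show "space q n \<subseteq> {f. \<forall>i. (i \<in> {..<n} \<longrightarrow> f i \<in> {..<q}) \<and> (i \<notin> {..<n} \<longrightarrow> f i = 0)}"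
    unfolding space_def by auto
qed (rule finite_set_of_finite_funs; simp)

lemma rt_covering_space: "rt_covering q m s R (space q (m * s))"
  unfolding rt_covering_def d_RT_def rt_ideal_def by (auto intro!: bexI)

lemma K_RT_le_card: "rt_covering q m s R C \<Longrightarrow> K_RT q m s R \<le> card C"
  unfolding K_RT_def by (rule Least_le) blast

lemma K_RT_attained: obtains C where "rt_covering q m s R C" and "card C = K_RT q m s R"
proof -
  have "\<exists>C. rt_covering q m s R C \<and> card C = K_RT q m s R"
    unfolding K_RT_def by (rule LeastI_ex) (use rt_covering_space in blast)
  then show ?thesis using that by blast
qed

definition lift_to_tops :: "nat \<Rightarrow> nat \<Rightarrow> (nat \<Rightarrow> nat) \<Rightarrow> nat \<Rightarrow> nat" where
  "lift_to_tops n s g = (\<lambda>j. if j < n * s \<and> j mod s = s - 1 then g (j div s) else 0)"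

lemma lift_to_tops_in_space:
  assumes "\<And>i. i < n \<Longrightarrow> g i < q" and "q \<ge> 1"
  shows "lift_to_tops n s g \<in> space q (n * s)"
  using assms less_mult_imp_div_less unfolding space_def lift_to_tops_def by auto

lemma lift_to_tops_block_top:
  assumes "s \<ge> 1" and "i < n" shows "lift_to_tops n s g (block_top s i) = g i"
  using assms block_top_div block_top_mod block_top_less unfolding lift_to_tops_def by simp

definition agreement_cover :: "nat \<Rightarrow> nat \<Rightarrow> nat \<Rightarrow> (nat \<Rightarrow> nat) set \<Rightarrow> bool" where
  "agreement_cover q n t C \<longleftrightarrow> (\<forall>c\<in>C. \<forall>i<n. c i < q) \<and>
     (\<forall>y\<in>space q n. \<exists>c\<in>C. t \<le> card {i. i < n \<and> y i = c i})"

lemma K_RT_le_agreement_cover: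
  assumes s: "s \<ge> 1" and q: "q \<ge> 1" and cover: "agreement_cover q n t C" and "finite C"
  shows "K_RT q n s (n * s - t) \<le> card C"
proof -
  have "rt_covering q n s (n * s - t) (lift_to_tops n s ` C)"
    unfolding rt_covering_def
  proof (intro conjI ballI)
    show "lift_to_tops n s ` C \<subseteq> space q (n * s)"
      using cover q lift_to_tops_in_space unfolding agreement_cover_def by blast
  next
    fix x assume x: "x \<in> space q (n * s)"
    define y where "y i = (if i < n then x (block_top s i) else 0)" for i
    have "y \<in> space q n"
      using x block_top_less[OF s] unfolding space_def y_def by auto
    then obtain c where c: "c \<in> C" and agree: "t \<le> card {i. i < n \<and> y i = c i}"
      using cover unfolding agreement_cover_def by blast
    have "d_RT n s x (lift_to_tops n s c) \<le> n * s - card {i. i < n \<and> y i = c i}"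
      by (rule d_RT_le_if_agree_on_block_tops[OF s]) (auto simp: y_def lift_to_tops_block_top[OF s])
    also have "\<dots> \<le> n * s - t" using agree by simp
    finally show "\<exists>c'\<in>lift_to_tops n s ` C. d_RT n s x c' \<le> n * s - t" using c by blast
  qed
  then have "K_RT q n s (n * s - t) \<le> card (lift_to_tops n s ` C)" by (rule K_RT_le_card)
  also have "\<dots> \<le> card C" using \<open>finite C\<close> by (rule card_image_le)
  finally show ?thesis .
qed

lemma agreement_cover_if_hamming_covering:
  assumes "t \<le> n" and C: "rt_covering q n 1 (n - t) C"
  shows "agreement_cover q n t C"
  unfolding agreement_cover_def
proof (intro conjI ballI)
  show "\<forall>i<n. c i < q" if "c \<in> C" for c
    using that C unfolding rt_covering_def space_def by auto
next
  fix y assume "y \<in> space q n"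
  then obtain c where "c \<in> C" and dist: "card {i. i < n \<and> y i \<noteq> c i} \<le> n - t"
    using C unfolding rt_covering_def d_RT_one_eq_hamming by auto
  have "{i. i < n \<and> y i = c i} = {..<n} - {i. i < n \<and> y i \<noteq> c i}" by auto
  then have "card {i. i < n \<and> y i = c i} = n - card {i. i < n \<and> y i \<noteq> c i}"
    by (simp add: card_Diff_subset subset_eq)
  then show "\<exists>c\<in>C. t \<le> card {i. i < n \<and> y i = c i}"
    using \<open>c \<in> C\<close> dist \<open>t \<le> n\<close> by (intro bexI[of _ c]) auto
qed

lemma card_binary_entries_ge:
  assumes y: "\<And>i. i < n \<Longrightarrow> y i < q"
    and rare: "\<And>v. v \<in> {2..<q} \<Longrightarrow> card {i. i < n \<and> y i = v} \<le> k"
  shows "n - (q - 2) * k \<le> card {i. i < n \<and> y i < 2}"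
proof -
  have "{i. i < n \<and> \<not> y i < 2} = (\<Union>v\<in>{2..<q}. {i. i < n \<and> y i = v})"
    using y by auto
  then have "card {i. i < n \<and> \<not> y i < 2} \<le> (\<Sum>v\<in>{2..<q}. card {i. i < n \<and> y i = v})"
    by (simp add: card_UN_le)
  also have "\<dots> \<le> (\<Sum>v\<in>{2..<q}. k)" using rare by (intro sum_mono) simp
  also have "\<dots> = (q - 2) * k" by simp
  finally have large: "card {i. i < n \<and> \<not> y i < 2} \<le> (q - 2) * k" .
  have "{i. i < n \<and> y i < 2} = {..<n} - {i. i < n \<and> \<not> y i < 2}" by auto
  then have "card {i. i < n \<and> y i < 2} = n - card {i. i < n \<and> \<not> y i < 2}"
    by (simp add: card_Diff_subset subset_eq)
  then show ?thesis using large by linarith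
qed

lemma agreement_cover_covering_array_rows_and_constants:
  assumes A: "covering_array N t n 2 A" and q: "q \<ge> 2"
    and n: "(q - 2) * (t - 1) + t \<le> n"
  shows "agreement_cover q n t (A ` {..<N} \<union> (\<lambda>v _. v) ` {2..<q})"
  unfolding agreement_cover_def
proof (intro conjI ballI)
  show "\<forall>i<n. c i < q" if "c \<in> A ` {..<N} \<union> (\<lambda>v _. v) ` {2..<q}" for c
    using that A q unfolding covering_array_def by fastforce
next
  fix y assume "y \<in> space q n"
  then have y: "\<And>i. i < n \<Longrightarrow> y i < q" unfolding space_def by blast
  show "\<exists>c\<in>A ` {..<N} \<union> (\<lambda>v _. v) ` {2..<q}. t \<le> card {i. i < n \<and> y i = c i}"
  proof (cases "\<exists>v\<in>{2..<q}. t \<le> card {i. i < n \<and> y i = v}")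
    case True
    then show ?thesis by auto
  next
    case False
    have rare: "card {i. i < n \<and> y i = v} \<le> t - 1" if "v \<in> {2..<q}" for v
    proof -
      have "\<not> t \<le> card {i. i < n \<and> y i = v}" using False that by blast
      then show ?thesis by linarith
    qed
    have "n - (q - 2) * (t - 1) \<le> card {i. i < n \<and> y i < 2}"
      by (rule card_binary_entries_ge[OF y rare])
    then have "t \<le> card {i. i < n \<and> y i < 2}" using n by linarith
    then obtain T where T: "T \<subseteq> {i. i < n \<and> y i < 2}" and "card T = t"
      by (meson obtain_subset_with_card_n)
    then have "T \<subseteq> {..<n}" and "\<forall>j\<in>T. y j < 2" by auto
    then obtain r where "r < N" and row: "\<forall>j\<in>T. A r j = y j"
      using A \<open>card T = t\<close> unfolding covering_array_def by blast
    have "card T \<le> card {i. i < n \<and> y i = A r i}"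
      using T row by (intro card_mono) auto
    moreover have "A r \<in> A ` {..<N}" using \<open>r < N\<close> by simp
    ultimately show ?thesis using \<open>card T = t\<close> by blast
  qed
qed

lemma covering_array_exists:
  assumes "v > 0" shows "\<exists>N A. covering_array N t n v A"
proof -
  obtain g where g: "bij_betw g {..<card (space v n)} (space v n)"
    using ex_bij_betw_nat_finite[OF finite_space] by (auto simp: atLeast0LessThan)
  have "covering_array (card (space v n)) t n v g"
    unfolding covering_array_def
  proof (intro conjI allI impI)
    fix i j assume "i < card (space v n)" and "j < n"
    then show "g i j < v" using bij_betwE[OF g] unfolding space_def by blast
  next
    fix T f assume T: "T \<subseteq> {..<n} \<and> card T = t" and f: "\<forall>j\<in>T. f j < v"
    have "(\<lambda>j. if j \<in> T then f j else 0) \<in> space v n"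
      using T f assms unfolding space_def by auto
    then have "(\<lambda>j. if j \<in> T then f j else 0) \<in> g ` {..<card (space v n)}"
      using bij_betw_imp_surj_on[OF g] by simp
    then obtain i where "i < card (space v n)" and gi: "(\<lambda>j. if j \<in> T then f j else 0) = g i"
      by auto
    moreover have "\<forall>j\<in>T. g i j = f j" by (simp flip: gi)
    ultimately show "\<exists>i<card (space v n). \<forall>j\<in>T. g i j = f j" by blast
  qed
  then show ?thesis by blast
qed

lemma CAN_attained: obtains A where "covering_array (CAN t n 2) t n 2 A"
proof -
  have "\<exists>A. covering_array (CAN t n 2) t n 2 A"
    unfolding CAN_def by (rule LeastI_ex) (use covering_array_exists[of 2] in simp)
  then show ?thesis using that by blast
qed

lemma K_RT_le_K_H:
  assumes "s \<ge> 1" and "q \<ge> 1" and "t \<le> n"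
  shows "K_RT q n s (n * s - t) \<le> K_H q n (n - t)"
proof -
  obtain C where C: "rt_covering q n 1 (n - t) C" and "card C = K_H q n (n - t)"
    using K_RT_attained unfolding K_H_def by metis
  have "finite C" using C unfolding rt_covering_def by (auto intro: finite_subset[OF _ finite_space])
  have "K_RT q n s (n * s - t) \<le> card C"
    by (rule K_RT_le_agreement_cover[OF assms(1,2) agreement_cover_if_hamming_covering[OF assms(3) C] \<open>finite C\<close>])
  then show ?thesis using \<open>card C = K_H q n (n - t)\<close> by simp
qed

lemma K_RT_le_CAN:
  assumes s: "s \<ge> 1" and q: "q \<ge> 2" and n: "(q - 2) * (t - 1) + t \<le> n"
  shows "K_RT q n s (n * s - t) \<le> q - 2 + CAN t n 2"
proof -
  obtain A where A: "covering_array (CAN t n 2) t n 2 A" using CAN_attained .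
  let ?constants = "(\<lambda>v _. v) ` {2..<q} :: (nat \<Rightarrow> nat) set"
  have "K_RT q n s (n * s - t) \<le> card (A ` {..<CAN t n 2} \<union> ?constants)"
    using s q agreement_cover_covering_array_rows_and_constants[OF A q n]
    by (intro K_RT_le_agreement_cover) simp_all
  also have "\<dots> \<le> card (A ` {..<CAN t n 2}) + card ?constants"
    by (rule card_Un_le)
  also have "\<dots> \<le> q - 2 + CAN t n 2"
    using card_image_le[of "{..<CAN t n 2}" A] card_image_le[of "{2..<q}" "\<lambda>v (_::nat). v"] by simp
  finally show ?thesis .
qed

theorem theorem2:
  fixes q t s :: nat
  assumes "q \<ge> 2" and "t \<ge> 2" and "s \<ge> 1"
  shows "K_RT q ((t - 1) * q) s ((t - 1) * q * s - t) \<le> K_H q ((t - 1) * q) ((t - 1) * q - t)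
       \<and> K_RT q ((t - 1) * q) s ((t - 1) * q * s - t) \<le> q - 2 + CAN t ((t - 1) * q) 2"
proof -
  define n where "n = (t - 1) * q"
  have "q = (q - 2) + 2" using assms by simp
  then have "n = (q - 2) * (t - 1) + 2 * (t - 1)" unfolding n_def by (metis add_mult_distrib mult.commute)
  then have "t \<le> n" and "(q - 2) * (t - 1) + t \<le> n" using assms by linarith+
  then have "K_RT q n s (n * s - t) \<le> K_H q n (n - t)"
    and "K_RT q n s (n * s - t) \<le> q - 2 + CAN t n 2"
    using assms K_RT_le_K_H K_RT_le_CAN by simp_all
  then show ?thesis unfolding n_def by simp
qed

end
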